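(* Let $n$ be a positive integer with $n^2 \ge 811$. Every family of $n^2$ graphs, each with $n$ vertices, has an induced-universal graph with fewer than $15n^2/7$ vertices.
   Context: A graph $U$ is an induced-universal graph for a family $\mathscr{F}$ if every graph of $\mathscr{F}$ is isomorphic to an induced subgraph of $U$. *)

theory Defs
  imports Complex_Main
begin

text \<open>A finite simple graph: a finite vertex set V together with a symmetric,
irreflexive adjacency relation E (only its restriction to V matters).\<close>
type_synonym 'a graph = "'a set \<times> ('a \<Rightarrow> 'a \<Rightarrow> bool)"

definition verts :: "'a graph \<Rightarrow> 'a set" where "verts G = fst G"
definition adj :: "'a graph \<Rightarrow> 'a \<Rightarrow> 'a \<Rightarrow> bool" where "adj G = snd G"

definition simple_graph :: "'a graph \<Rightarrow> bool" where
  "simple_graph G \<longleftrightarrow> finite (verts G) \<and>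
     (\<forall>x\<in>verts G. \<forall>y\<in>verts G. adj G x y \<longleftrightarrow> adj G y x) \<and>
     (\<forall>x\<in>verts G. \<not> adj G x x)"

definition induced_embeds :: "'a graph \<Rightarrow> 'b graph \<Rightarrow> bool" where
  "induced_embeds G U \<longleftrightarrow> (\<exists>f. inj_on f (verts G) \<and> f ` verts G \<subseteq> verts U \<and>
     (\<forall>x\<in>verts G. \<forall>y\<in>verts G. adj U (f x) (f y) \<longleftrightarrow> adj G x y))"

definition induced_universal :: "'b graph \<Rightarrow> 'a graph set \<Rightarrow> bool" where
  "induced_universal U F \<longleftrightarrow> (\<forall>G\<in>F. induced_embeds G U)"

end

theory Submission
  imports Defs "HOL-Number_Theory.Cong" "HOL-Library.Discrete_Functions"
begin

(* Label the vertices of each G i by {..<n}, pick a prime p with n \<le> p \<le> 2n - 2 (Bertrand's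
   postulate), and write the index i < n^2 in base n as (a, b). The graph G i is drawn on the
   line u \<mapsto> a + b u of the grid {..<n} \<times> Z/p, vertex u going to the point (u, a + b u); U is
   the union of all these drawings. Two distinct lines meet in at most one point, so on the line
   of G j no other G i contributes an edge: G j is an induced subgraph of U, and U has
   n p \<le> n (2n - 2) < 15 n^2 / 7 vertices.

   Bertrand's postulate is proved by Erdos' argument: if there were no prime in (n, 2n], every
   prime factor of the central binomial coefficient would be at most 2n/3, and bounding the
   contribution of the primes below and above sqrt (2n) separately contradicts
   4^n \<le> 2n (2n choose n) for n \<ge> 450; smaller n are covered by a chain of primes. *)

section \<open>Bertrand's postulate\<close>

lemma double_div_le_twice_div_plus_1: "2 * n div d \<le> 2 * (n div d) + (1::nat)"
proof (cases "d = 0")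
  case False
  have "n < d + n div d * d"
    using False by (simp add: dividend_less_div_times)
  then have "2 * n < (2 * (n div d) + 2) * d"
    by (simp add: algebra_simps)
  then have "2 * n div d < 2 * (n div d) + 2"
    by (rule less_mult_imp_div_less)
  then show ?thesis
    by simp
qed simp

lemma twice_div_le_double_div: "2 * (n div d) \<le> 2 * n div (d::nat)"
proof (cases "d = 0")
  case False
  have "2 * (n div d) * d \<le> 2 * n"
    using div_times_less_eq_dividend[of n d] by linarith
  then show ?thesis
    using False by (simp add: less_eq_div_iff_mult_less_eq)
qed simp

lemma multiplicity_fact:
  fixes p :: nat
  assumes p: "prime p" and "m < p ^ N"
  shows "multiplicity p (fact m) = (\<Sum>i=1..N. m div p ^ i)"
  using assms(2)
proof (induction m)
  case (Suc m)
  define e where "e = multiplicity p (Suc m)"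
  have "p ^ e \<le> Suc m"
    unfolding e_def by (rule dvd_imp_le[OF multiplicity_dvd]) simp
  then have "p ^ e < p ^ N"
    using Suc.prems by linarith
  then have "e < N"
    using p prime_gt_1_nat power_less_imp_less_exp by blast
  have "p ^ i dvd Suc m \<longleftrightarrow> i \<le> e" for i
    unfolding e_def by (rule power_dvd_iff_le_multiplicity) (use p not_prime_unit in auto)
  then have "(\<Sum>i=1..N. if p ^ i dvd Suc m then 1 else 0) = (\<Sum>i=1..N. if i \<le> e then 1 else (0::nat))"
    by simp
  also have "\<dots> = (\<Sum>i=1..e. 1)"
    using \<open>e < N\<close> by (intro sum.mono_neutral_cong_right) auto
  finally have "(\<Sum>i=1..N. if p ^ i dvd Suc m then 1 else 0) = e"
    by simp
  moreover have "Suc m div p ^ i = m div p ^ i + (if p ^ i dvd Suc m then 1 else 0)" for i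
    by (simp add: div_Suc dvd_eq_mod_eq_0)
  ultimately have sum_Suc: "(\<Sum>i=1..N. Suc m div p ^ i) = (\<Sum>i=1..N. m div p ^ i) + e"
    by (simp only: sum.distrib)
  have "multiplicity p (fact (Suc m) :: nat) = multiplicity p (Suc m * fact m)"
    by simp
  also have "\<dots> = e + multiplicity p (fact m :: nat)"
    unfolding e_def by (rule prime_elem_multiplicity_mult_distrib) (use p in auto)
  finally show ?case
    using Suc sum_Suc by simp
qed simp

lemma multiplicity_central_binomial:
  fixes p :: nat
  assumes p: "prime p" and N: "2 * n < p ^ N"
  shows "multiplicity p (2 * n choose n) = (\<Sum>i=1..N. 2 * n div p ^ i - 2 * (n div p ^ i))"
proof -
  have "(fact (2 * n) :: nat) = fact n * fact n * (2 * n choose n)"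
    using binomial_fact_lemma[of n "2 * n"] by simp
  then have "multiplicity p (fact (2 * n) :: nat)
      = 2 * multiplicity p (fact n :: nat) + multiplicity p (2 * n choose n)"
    using p by (simp add: prime_elem_multiplicity_mult_distrib)
  moreover have "multiplicity p (fact (2 * n) :: nat) = (\<Sum>i=1..N. 2 * n div p ^ i)"
    by (rule multiplicity_fact[OF p N])
  moreover have "multiplicity p (fact n :: nat) = (\<Sum>i=1..N. n div p ^ i)"
    by (rule multiplicity_fact[OF p]) (use N in linarith)
  moreover have "2 * (n div p ^ i) \<le> 2 * n div p ^ i" for i
    by (rule twice_div_le_double_div)
  ultimately show ?thesis
    by (simp add: sum_subtractf_nat sum_distrib_left)
qed

lemma prime_power_multiplicity_central_binomial_le:
  fixes p :: nat
  assumes p: "prime p" and "n > 0"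
  shows "p ^ multiplicity p (2 * n choose n) \<le> 2 * n"
proof (rule ccontr)
  define e where "e = multiplicity p (2 * n choose n)"
  assume "\<not> p ^ multiplicity p (2 * n choose n) \<le> 2 * n"
  then have e: "2 * n < p ^ e"
    unfolding e_def by simp
  with \<open>n > 0\<close> have "e > 0"
    by (cases e) auto
  have "e = (\<Sum>i=1..e. 2 * n div p ^ i - 2 * (n div p ^ i))"
    unfolding e_def by (rule multiplicity_central_binomial[OF p e[unfolded e_def]])
  also have "\<dots> = (\<Sum>i=1..<e. 2 * n div p ^ i - 2 * (n div p ^ i))"
    using \<open>e > 0\<close> e by (simp add: atLeastLessThanSuc_atLeastAtMost[symmetric] del: One_nat_def)
  also have "\<dots> \<le> (\<Sum>i=1..<e. 1)"
    by (intro sum_mono) (use double_div_le_twice_div_plus_1[of n] in \<open>simp add: le_diff_conv\<close>)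
  finally show False
    using \<open>e > 0\<close> by simp
qed

lemma multiplicity_central_binomial_le_1:
  fixes p :: nat
  assumes p: "prime p" and "2 * n < p ^ 2"
  shows "multiplicity p (2 * n choose n) \<le> 1"
proof -
  have "multiplicity p (2 * n choose n) = (\<Sum>i=1..2. 2 * n div p ^ i - 2 * (n div p ^ i))"
    by (rule multiplicity_central_binomial[OF assms])
  also have "\<dots> = 2 * n div p - 2 * (n div p)"
    using assms(2) by (simp add: numeral_2_eq_2)
  also have "\<dots> \<le> 1"
    using double_div_le_twice_div_plus_1[of n p] by linarith
  finally show ?thesis .
qed

lemma multiplicity_central_binomial_eq_0:
  fixes p :: nat
  assumes p: "prime p" and "2 * n < p ^ 2" and "p \<le> n" and "2 * n < 3 * p"
  shows "multiplicity p (2 * n choose n) = 0"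
proof -
  have "n div p = 1" "2 * n div p = 2"
    using assms by (auto intro: div_nat_eqI)
  moreover have "multiplicity p (2 * n choose n) = (\<Sum>i=1..2. 2 * n div p ^ i - 2 * (n div p ^ i))"
    by (rule multiplicity_central_binomial[OF p assms(2)])
  ultimately show ?thesis
    using assms(2) by (simp add: numeral_2_eq_2)
qed

lemma prime_dvd_choose:
  fixes p :: nat
  assumes p: "prime p" and "k < p" "n - k < p" "p \<le> n"
  shows "p dvd (n choose k)"
proof -
  have "fact k * fact (n - k) * (n choose k) = (fact n :: nat)"
    using assms by (simp add: binomial_fact_lemma)
  moreover have "p dvd fact n" and "\<not> p dvd fact k * fact (n - k)"
    using assms by (simp_all add: prime_dvd_fact_iff prime_dvd_mult_iff)
  ultimately show ?thesis
    using p by (metis prime_dvd_mult_iff)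
qed

lemma prod_subset_prime_factors_dvd:
  fixes N :: nat
  assumes "N \<noteq> 0" "T \<subseteq> prime_factors N"
  shows "\<Prod>T dvd N"
proof -
  have "\<Prod>T dvd \<Prod>(prime_factors N)"
    using assms(2) by (rule prod_dvd_prod_subset[rotated]) simp
  also have "\<Prod>(prime_factors N) = prod_mset (mset_set (prime_factors N))"
    by (simp add: prod_unfold_prod_mset)
  also have "\<dots> dvd prod_mset (prime_factorization N)"
    by (rule prod_mset_subset_imp_dvd) (rule mset_set_set_mset_msubset)
  finally show ?thesis
    using assms(1) by simp
qed

lemma prod_primes_le_four_power: "\<Prod>{p::nat. prime p \<and> p \<le> m} \<le> 4 ^ m"
proof (induction m rule: less_induct)
  case (less m)
  consider "m < 2" | "m = 2" | "even m" "m > 2" | j where "m = 2 * j + 1" "j > 0"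
    by (cases "m < 2"; cases "m = 2"; cases "even m") (auto elim!: oddE)
  then show ?case
  proof cases
    case 1
    then have "{p::nat. prime p \<and> p \<le> m} = {}"
      by (auto dest: prime_ge_2_nat)
    then show ?thesis
      by (simp only:) simp
  next
    case 2
    then have "{p::nat. prime p \<and> p \<le> m} = {2}"
      by (auto dest: prime_ge_2_nat)
    then show ?thesis
      using \<open>m = 2\<close> by (simp only:) simp
  next
    case 3
    then have "\<not> prime m"
      using prime_odd_nat by blast
    have "prime p \<and> p \<le> m \<longleftrightarrow> prime p \<and> p \<le> m - 1" for p
      using \<open>\<not> prime m\<close> by (cases "p = m") auto
    then have "{p. prime p \<and> p \<le> m} = {p. prime p \<and> p \<le> m - 1}"
      by simp
    also have "\<Prod>\<dots> \<le> 4 ^ (m - 1)"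
      using less.IH \<open>m > 2\<close> by simp
    also have "\<dots> \<le> 4 ^ m"
      by simp
    finally show ?thesis .
  next
    case 4
    define T where "T = {p. prime p \<and> j + 1 < p \<and> p \<le> m}"
    have split: "{p. prime p \<and> p \<le> m} = {p. prime p \<and> p \<le> j + 1} \<union> T"
      unfolding T_def using 4 by auto
    have "T \<subseteq> prime_factors (m choose j)"
      unfolding T_def using 4 by (auto simp: prime_factors_dvd intro: prime_dvd_choose)
    then have "\<Prod>T \<le> m choose j"
      using 4 by (intro dvd_imp_le prod_subset_prime_factors_dvd) simp_all
    also have "\<dots> \<le> (\<Sum>k\<le>j. m choose k)"
      by (rule member_le_sum) auto
    also have "\<dots> = 4 ^ j"
      using binomial_r_part_sum[of j] 4 by (simp add: power_mult)
    finally have "\<Prod>T \<le> 4 ^ j" .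
    have "\<Prod>{p. prime p \<and> p \<le> m} = \<Prod>{p. prime p \<and> p \<le> j + 1} * \<Prod>T"
      unfolding split by (rule prod.union_disjoint) (auto simp: T_def)
    also have "\<dots> \<le> 4 ^ (j + 1) * 4 ^ j"
      using less.IH[of "j + 1"] 4 \<open>\<Prod>T \<le> 4 ^ j\<close> by (intro mult_le_mono) simp_all
    also have "\<dots> = 4 ^ m"
      using 4 by (simp add: mult_2 flip: power_add)
    finally show ?thesis .
  qed
qed

lemma four_power_le_central_binomial:
  assumes "n > 0"
  shows "4 ^ n \<le> 2 * n * (2 * n choose n)"
proof -
  have "real (4 ^ n) \<le> real (2 * n) * real (2 * n choose n)"
    using central_binomial_lower_bound[OF assms] assms by (simp add: divide_le_eq mult.commute)
  then show ?thesis
    by (simp only: of_nat_mult[symmetric] of_nat_le_iff)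
qed

lemma prime_factor_choose_le:
  fixes p :: nat
  assumes "p \<in> prime_factors (n choose k)"
  shows "p \<le> n"
proof -
  have "k \<le> n"
    using assms binomial_eq_0[of n k] by (cases "k \<le> n") auto
  then have "(n choose k) dvd fact n"
    by (metis binomial_fact_lemma dvd_triv_right)
  then have "p dvd fact n"
    using in_prime_factors_imp_dvd[OF assms] by (rule dvd_trans[rotated])
  then show ?thesis
    using in_prime_factors_imp_prime[OF assms] by (simp add: prime_dvd_fact_iff)
qed

lemma prod_small_prime_factors_central_binomial_le:
  assumes "n > 0"
  defines "C \<equiv> 2 * n choose n" and "k \<equiv> floor_sqrt (2 * n)"
  shows "(\<Prod>p\<in>{p\<in>prime_factors C. p \<le> k}. p ^ multiplicity p C) \<le> (2 * n) ^ (k - 1)"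
proof -
  let ?S = "{p\<in>prime_factors C. p \<le> k}"
  have "?S \<subseteq> {2..k}"
  proof
    fix p assume "p \<in> ?S"
    moreover from this have "prime p"
      by (auto intro: in_prime_factors_imp_prime)
    ultimately show "p \<in> {2..k}"
      by (simp add: prime_ge_2_nat)
  qed
  then have "card ?S \<le> k - 1"
    using card_mono[of "{2..k}" ?S] by simp
  have "(\<Prod>p\<in>?S. p ^ multiplicity p C) \<le> (\<Prod>p\<in>?S. 2 * n)"
    using assms by (intro prod_mono) (auto intro: prime_power_multiplicity_central_binomial_le)
  also have "\<dots> = (2 * n) ^ card ?S"
    by simp
  also have "\<dots> \<le> (2 * n) ^ (k - 1)"
    using \<open>card ?S \<le> k - 1\<close> assms by (intro power_increasing) auto
  finally show ?thesis .
qed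

lemma prod_large_prime_factors_central_binomial_le:
  assumes "\<not> (\<exists>p. prime p \<and> n < p \<and> p \<le> 2 * n)"
  defines "C \<equiv> 2 * n choose n" and "k \<equiv> floor_sqrt (2 * n)"
  shows "(\<Prod>p\<in>{p\<in>prime_factors C. k < p}. p ^ multiplicity p C) \<le> 4 ^ (2 * n div 3)"
proof -
  let ?S = "{p\<in>prime_factors C. k < p}"
  have large: "prime p" "2 * n < p ^ 2" "p \<le> n" if "p \<in> ?S" for p
  proof -
    show "prime p"
      using that by (auto intro: in_prime_factors_imp_prime)
    moreover have "p \<le> 2 * n"
      using that prime_factor_choose_le unfolding C_def by blast
    ultimately show "p \<le> n"
      using assms(1) by (meson not_less)
    show "2 * n < p ^ 2"
      using that le_floor_sqrt_iff[of p "2 * n"] unfolding k_def by auto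
  qed
  have "(\<Prod>p\<in>?S. p ^ multiplicity p C) \<le> \<Prod>?S"
  proof (intro prod_mono conjI)
    fix p assume "p \<in> ?S"
    then have "multiplicity p C \<le> 1"
      using multiplicity_central_binomial_le_1[OF large(1,2)] by (simp add: C_def)
    then show "p ^ multiplicity p C \<le> p"
      using power_increasing[of _ 1 p] prime_gt_0_nat[OF large(1)[OF \<open>p \<in> ?S\<close>]] by simp
  qed simp
  also have "\<dots> \<le> \<Prod>{p. prime p \<and> p \<le> 2 * n div 3}"
  proof (rule dvd_imp_le)
    have "p \<le> 2 * n div 3" if "p \<in> ?S" for p
    proof -
      have "multiplicity p C > 0"
        using that by (simp add: prime_factors_multiplicity)
      then have "\<not> 2 * n < 3 * p"
        using multiplicity_central_binomial_eq_0[OF large[OF that]] by (auto simp: C_def)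
      then show ?thesis
        by linarith
    qed
    then show "\<Prod>?S dvd \<Prod>{p. prime p \<and> p \<le> 2 * n div 3}"
      by (intro prod_dvd_prod_subset) (auto simp: large)
  qed (auto simp: prime_gt_0_nat)
  also have "\<dots> \<le> 4 ^ (2 * n div 3)"
    by (rule prod_primes_le_four_power)
  finally show ?thesis .
qed

lemma succ_pow6_less_two_power:
  fixes k :: nat
  assumes "k \<ge> 30"
  shows "(k + 1) ^ 6 < 2 ^ k"
  using assms
proof (induction k rule: dec_induct)
  case (step k)
  have "10 * (k + 2) \<le> 11 * (k + 1)"
    using step by simp
  then have "(10 * (k + 2)) ^ 6 \<le> (11 * (k + 1)) ^ 6"
    by (rule power_mono) simp
  then have "1000000 * (k + 2) ^ 6 \<le> 1771561 * (k + 1) ^ 6"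
    by (simp only: power_mult_distrib) simp
  then have "(k + 2) ^ 6 \<le> 2 * (k + 1) ^ 6"
    by linarith
  also have "\<dots> < 2 * 2 ^ k"
    using step.IH by simp
  finally show ?case
    by simp
qed simp

lemma bertrand_inequality:
  assumes "n \<ge> 450"
  shows "(2 * n) ^ floor_sqrt (2 * n) * 4 ^ (2 * n div 3) < (4::nat) ^ n"
proof -
  define k where "k = floor_sqrt (2 * n)"
  define m where "m = 2 * n div 3"
  have "k \<ge> 30"
    unfolding k_def using assms by (simp add: le_floor_sqrt_iff)
  have "2 * n < (k + 1) ^ 2"
    using Suc_floor_sqrt_power2_gt unfolding k_def by simp
  then have "(2 * n) ^ 3 < ((k + 1) ^ 2) ^ 3"
    by (rule power_strict_mono) auto
  then have "(2 * n) ^ 3 < (k + 1) ^ 6"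
    by (simp flip: power_mult)
  then have "((2 * n) ^ 3) ^ k < ((k + 1) ^ 6) ^ k"
    using \<open>k \<ge> 30\<close> by (intro power_strict_mono) auto
  then have "((2 * n) ^ k) ^ 3 < ((k + 1) ^ 6) ^ k"
    by (metis power_mult mult.commute)
  also have "\<dots> < (2 ^ k) ^ k"
    using succ_pow6_less_two_power[OF \<open>k \<ge> 30\<close>] \<open>k \<ge> 30\<close> by (intro power_strict_mono) auto
  also have "\<dots> \<le> 2 ^ (2 * n)"
    unfolding k_def by (simp add: power_increasing flip: power_mult power2_eq_square)
  also have "\<dots> = 4 ^ n"
    by (simp add: power_mult)
  also have "\<dots> \<le> 4 ^ ((n - m) * 3)"
    unfolding m_def by (intro power_increasing) auto
  also have "\<dots> = (4 ^ (n - m)) ^ 3"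
    by (simp add: power_mult)
  finally have "(2 * n) ^ k < 4 ^ (n - m)"
    by (rule power_less_imp_less_base) simp
  then have "(2 * n) ^ k * 4 ^ m < 4 ^ (n - m) * 4 ^ m"
    by simp
  also have "\<dots> = 4 ^ n"
    unfolding m_def by (simp flip: power_add)
  finally show ?thesis
    unfolding k_def m_def .
qed

lemma bertrand_large:
  fixes n :: nat
  assumes "n \<ge> 450"
  shows "\<exists>p. prime p \<and> n < p \<and> p \<le> 2 * n"
proof (rule ccontr)
  define C where "C = 2 * n choose n"
  define k where "k = floor_sqrt (2 * n)"
  assume none: "\<not> (\<exists>p. prime p \<and> n < p \<and> p \<le> 2 * n)"
  have "C = (\<Prod>p\<in>prime_factors C. p ^ multiplicity p C)"
    unfolding C_def by (simp add: prod_prime_factors)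
  also have "\<dots> = (\<Prod>p\<in>{p\<in>prime_factors C. p \<le> k}. p ^ multiplicity p C)
      * (\<Prod>p\<in>{p\<in>prime_factors C. k < p}. p ^ multiplicity p C)"
    by (subst prod.union_disjoint[symmetric]) (auto intro: prod.cong)
  also have "\<dots> \<le> (2 * n) ^ (k - 1) * 4 ^ (2 * n div 3)"
    using assms none unfolding C_def k_def
    by (intro mult_le_mono prod_small_prime_factors_central_binomial_le
        prod_large_prime_factors_central_binomial_le) auto
  finally have C_le: "C \<le> (2 * n) ^ (k - 1) * 4 ^ (2 * n div 3)" .
  have "4 ^ n \<le> 2 * n * C"
    unfolding C_def using assms by (intro four_power_le_central_binomial) simp
  also have "\<dots> \<le> 2 * n * ((2 * n) ^ (k - 1) * 4 ^ (2 * n div 3))"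
    using C_le by simp
  also have "\<dots> = (2 * n) ^ k * 4 ^ (2 * n div 3)"
  proof -
    have "k = Suc (k - 1)"
      using assms unfolding k_def by simp
    then show ?thesis
      by (metis mult.assoc power_Suc)
  qed
  finally show False
    using bertrand_inequality[OF assms, folded k_def] by linarith
qed

lemma bertrand_chain:
  fixes a n :: nat
  assumes "list_all prime ps" and "successively (\<lambda>p q. q \<le> 2 * p) (a # ps)"
    and "a \<le> n" and "n < last (a # ps)"
  shows "\<exists>p. prime p \<and> n < p \<and> p \<le> 2 * n"
  using assms
proof (induction ps arbitrary: a)
  case (Cons q ps)
  show ?case
  proof (cases "n < q")
    case True
    then show ?thesis
      using Cons.prems by auto
  next
    case False
    then show ?thesis
      using Cons.prems by (intro Cons.IH[of q]) auto
  qed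
qed simp

theorem bertrand:
  fixes n :: nat
  assumes "n \<ge> 1"
  shows "\<exists>p. prime p \<and> n < p \<and> p \<le> 2 * n"
proof (cases "n \<ge> 450")
  case False
  have primes: "list_all prime [2, 3, 5, 7, 13, 23, 43, 83, 163, 317, 631::nat]"
    by code_simp
  show ?thesis
    using False assms by (intro bertrand_chain[OF primes, where a = 1]) simp_all
qed (rule bertrand_large)

section \<open>Induced-universal graphs from lines over a prime field\<close>

lemma lines_mod_prime_meet_once:
  fixes p a b a' b' u v :: nat
  assumes p: "prime p" and lt: "a < p" "b < p" "a' < p" "b' < p" "u < p" "v < p" and "u \<noteq> v"
    and cu: "[a + b * u = a' + b' * u] (mod p)" and cv: "[a + b * v = a' + b' * v] (mod p)"
  shows "a = a' \<and> b = b'"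
proof -
  have "[int b * (int u - int v) = int b' * (int u - int v)] (mod int p)"
    using cong_diff[OF cu[folded cong_int_iff] cv[folded cong_int_iff]] by (simp add: algebra_simps)
  moreover have "coprime (int u - int v) (int p)"
  proof -
    have "\<not> int p dvd int u - int v"
    proof
      assume "int p dvd int u - int v"
      then have "\<bar>int p\<bar> \<le> \<bar>int u - int v\<bar>"
        by (rule dvd_imp_le_int[rotated]) (use \<open>u \<noteq> v\<close> in simp)
      with lt show False
        by linarith
    qed
    then show ?thesis
      using p by (simp add: coprime_commute prime_imp_coprime_int)
  qed
  ultimately have "[int b = int b'] (mod int p)"
    by (simp add: cong_mult_rcancel)
  then have "b = b'"
    using lt by (simp add: cong_int_iff cong_less_imp_eq_nat)
  with cu have "a = a'"
    using lt by (simp add: cong_add_rcancel_nat cong_less_imp_eq_nat)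
  with \<open>b = b'\<close> show ?thesis
    by simp
qed

lemma affine_codes_meet_once:
  fixes n p i j u v :: nat
  assumes "prime p" "n \<le> p" "i < n ^ 2" "j < n ^ 2" "u < n" "v < n" "u \<noteq> v"
    and "(i div n + i mod n * u) mod p = (j div n + j mod n * u) mod p"
    and "(i div n + i mod n * v) mod p = (j div n + j mod n * v) mod p"
  shows "i = j"
proof -
  have "i div n < n" "j div n < n"
    using assms(3,4) by (simp_all add: power2_eq_square less_mult_imp_div_less)
  moreover have "i mod n < n" "j mod n < n"
    using assms(5) by (simp_all add: mod_less_divisor[of n])
  ultimately have "i div n < p" "i mod n < p" "j div n < p" "j mod n < p" "u < p" "v < p"
    using assms(2,5,6) by linarith+
  then have "i div n = j div n \<and> i mod n = j mod n"
    using assms(8,9) by (intro lines_mod_prime_meet_once[OF assms(1) _ _ _ _ _ _ assms(7)])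
      (simp_all add: cong_def)
  then show ?thesis
    by (metis div_mult_mod_eq)
qed

(* The vertex u * p + r stands for the point (u, r) of the grid {..<n} \<times> {..<p}; vertex \<sigma> i u
   of G i is placed at the point (u, c i u). *)
definition line_union_graph ::
    "nat \<Rightarrow> nat \<Rightarrow> 'i set \<Rightarrow> ('i \<Rightarrow> nat \<Rightarrow> nat) \<Rightarrow> ('i \<Rightarrow> 'a graph) \<Rightarrow> ('i \<Rightarrow> nat \<Rightarrow> 'a) \<Rightarrow> nat graph"
  where
  "line_union_graph n p I c G \<sigma> =
     ({..<n * p}, \<lambda>x y. x div p \<noteq> y div p \<and>
        (\<exists>i\<in>I. c i (x div p) = x mod p \<and> c i (y div p) = y mod p \<and>
           adj (G i) (\<sigma> i (x div p)) (\<sigma> i (y div p))))"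

lemma verts_line_union_graph: "verts (line_union_graph n p I c G \<sigma>) = {..<n * p}"
  by (simp add: line_union_graph_def verts_def)

lemma adj_line_union_graph:
  "adj (line_union_graph n p I c G \<sigma>) x y \<longleftrightarrow> x div p \<noteq> y div p \<and>
     (\<exists>i\<in>I. c i (x div p) = x mod p \<and> c i (y div p) = y mod p \<and>
        adj (G i) (\<sigma> i (x div p)) (\<sigma> i (y div p)))"
  by (simp add: line_union_graph_def adj_def)

lemma simple_graph_line_union_graph:
  assumes "\<And>i. i \<in> I \<Longrightarrow> simple_graph (G i)"
    and "\<And>i u. i \<in> I \<Longrightarrow> u < n \<Longrightarrow> \<sigma> i u \<in> verts (G i)"
  shows "simple_graph (line_union_graph n p I c G \<sigma>)"
proof -
  have sym: "adj (G i) (\<sigma> i u) (\<sigma> i v) \<longleftrightarrow> adj (G i) (\<sigma> i v) (\<sigma> i u)"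
    if "i \<in> I" "u < n" "v < n" for i u v
    using assms[OF that(1)] that(2,3) unfolding simple_graph_def by blast
  have "x div p < n" if "x < n * p" for x
    using that by (simp add: less_mult_imp_div_less)
  with sym show ?thesis
    unfolding simple_graph_def verts_line_union_graph adj_line_union_graph by auto
qed

lemma induced_embeds_line_union_graph:
  assumes "j \<in> I" and "simple_graph (G j)" and \<sigma>: "bij_betw (\<sigma> j) {..<n} (verts (G j))"
    and c_less: "\<And>u. u < n \<Longrightarrow> c j u < p"
    and meet: "\<And>i u v. i \<in> I \<Longrightarrow> u < n \<Longrightarrow> v < n \<Longrightarrow> u \<noteq> v \<Longrightarrow>
                 c i u = c j u \<Longrightarrow> c i v = c j v \<Longrightarrow> i = j"
  shows "induced_embeds (G j) (line_union_graph n p I c G \<sigma>)"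
proof -
  define \<tau> where "\<tau> = inv_into {..<n} (\<sigma> j)"
  define f where "f v = \<tau> v * p + c j (\<tau> v)" for v
  have \<tau>_less: "\<tau> v < n" if "v \<in> verts (G j)" for v
    using \<sigma> that unfolding \<tau>_def bij_betw_def by (metis inv_into_into lessThan_iff)
  have \<sigma>_\<tau>: "\<sigma> j (\<tau> v) = v" if "v \<in> verts (G j)" for v
    using \<sigma> that unfolding \<tau>_def bij_betw_def by (simp add: f_inv_into_f)
  have f_div: "f v div p = \<tau> v" and f_mod: "f v mod p = c j (\<tau> v)" if "v \<in> verts (G j)" for v
    using c_less[OF \<tau>_less[OF that]] unfolding f_def by simp_all
  have f_less: "f v < n * p" if "v \<in> verts (G j)" for v
  proof -
    have "f v < (\<tau> v + 1) * p"
      using c_less[OF \<tau>_less[OF that]] unfolding f_def by simp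
    also have "\<dots> \<le> n * p"
      using \<tau>_less[OF that] by (intro mult_right_mono) auto
    finally show ?thesis .
  qed
  have "inj_on f (verts (G j))"
    by (rule inj_onI) (metis f_div \<sigma>_\<tau>)
  moreover have "adj (line_union_graph n p I c G \<sigma>) (f v) (f w) \<longleftrightarrow> adj (G j) v w"
    if v: "v \<in> verts (G j)" and w: "w \<in> verts (G j)" for v w
  proof
    assume "adj (line_union_graph n p I c G \<sigma>) (f v) (f w)"
    then obtain i where "i \<in> I" "\<tau> v \<noteq> \<tau> w" "c i (\<tau> v) = c j (\<tau> v)" "c i (\<tau> w) = c j (\<tau> w)"
        and "adj (G i) (\<sigma> i (\<tau> v)) (\<sigma> i (\<tau> w))"
      unfolding adj_line_union_graph f_div[OF v] f_div[OF w] f_mod[OF v] f_mod[OF w] by auto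
    moreover from this have "i = j"
      using meet \<tau>_less v w by blast
    ultimately show "adj (G j) v w"
      using \<sigma>_\<tau> v w by simp
  next
    assume "adj (G j) v w"
    moreover from this have "v \<noteq> w"
      using \<open>simple_graph (G j)\<close> v unfolding simple_graph_def by auto
    ultimately show "adj (line_union_graph n p I c G \<sigma>) (f v) (f w)"
      unfolding adj_line_union_graph f_div[OF v] f_div[OF w] f_mod[OF v] f_mod[OF w]
      using \<open>j \<in> I\<close> \<sigma>_\<tau> v w by metis
  qed
  ultimately show ?thesis
    unfolding induced_embeds_def verts_line_union_graph using f_less by (intro exI[of _ f]) auto
qed

theorem corollary2:
  fixes n :: nat and G :: "nat \<Rightarrow> 'a graph"
  assumes "n > 0" and "n^2 \<ge> 811"
    and "\<forall>i<n^2. simple_graph (G i) \<and> card (verts (G i)) = n"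
  shows "\<exists>U :: nat graph. simple_graph U \<and>
           real (card (verts U)) < 15 * real n^2 / 7 \<and>
           induced_universal U (G ` {..<n^2})"
proof -
  (* The hypothesis n^2 \<ge> 811 is only used in the weak form n \<ge> 2. *)
  have "n \<ge> 2"
    using assms(2) power_mono[of n 1 2] by (cases "n \<le> 1") auto
  then obtain p where p: "prime p" "n \<le> p" "p \<le> 2 * n - 2"
    using bertrand[of "n - 1"] by fastforce
  have "\<exists>h. bij_betw h {..<n} (verts (G i))" if "i < n^2" for i
    using ex_bij_betw_nat_finite[of "verts (G i)"] assms(3) that
    by (auto simp: simple_graph_def atLeast0LessThan)
  then obtain \<sigma> where \<sigma>: "\<And>i. i < n^2 \<Longrightarrow> bij_betw (\<sigma> i) {..<n} (verts (G i))"
    by metis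
  define c where "c i u = (i div n + i mod n * u) mod p" for i u
  define U where "U = line_union_graph n p {..<n^2} c G \<sigma>"
  have "simple_graph U"
    unfolding U_def using assms(3) \<sigma>
    by (intro simple_graph_line_union_graph) (auto simp: bij_betw_def)
  moreover have "real (card (verts U)) < 15 * real n^2 / 7"
  proof -
    have "real (card (verts U)) = real n * real p"
      by (simp add: U_def verts_line_union_graph)
    also have "\<dots> \<le> real n * (2 * real n - 2)"
      using p(3) \<open>n \<ge> 2\<close> by (intro mult_left_mono) linarith+
    also have "\<dots> < 15 * real n^2 / 7"
      using \<open>n \<ge> 2\<close> by (simp add: power2_eq_square field_simps add_pos_pos)
    finally show ?thesis .
  qed
  moreover have "induced_embeds (G j) U" if "j < n^2" for j
    unfolding U_def using that assms(3) \<sigma> p prime_gt_0_nat[OF p(1)]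
    by (intro induced_embeds_line_union_graph) (auto simp: c_def intro: affine_codes_meet_once)
  ultimately show ?thesis
    unfolding induced_universal_def by blast
qed

end
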